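(* Let $d\in\mathbb{Z}_{\ge1}$ and $\gamma\in\mathbb{Z}_{\ge2}$. If integers $y(\ell),x^{\mathrm{bin}}(\ell),z(\ell)$ ($0\le\ell\le d-1$), $r(\ell)$ ($0\le\ell\le d$) form a solution of the constraint system $\mathcal{S}(d,\gamma)$, then $r(d)=\gamma^i$ for some integer $i$ with $1\le i\le 2^d-1$. Equivalently, if $r(d)$ is not of the form $\gamma^i$ with $i\in\mathbb{Z}_{\ge1}$, the system $\mathcal{S}(d,\gamma)$ has no integer solution with this value of $r(d)$.
   Context: Constraint system $\mathcal{S}(d,\gamma)$: for given integers $d\ge1$, $\gamma\ge2$, integer variables $y(\ell),x^{\mathrm{bin}}(\ell),z(\ell)$ for $\ell\in\{0,\dots,d-1\}$ and $r(\ell)$ for $\ell\in\{0,\dots,d\}$, subject to, for every $\ell\in\{0,\dots,d-1\}$ (writing $g_\ell:=\gamma^{2^\ell}$): (C1) $y(\ell)\ge0$; (C2) $y(\ell)\le r(\ell+1)/g_\ell+1/(g_\ell+1)$; (C3) $y(\ell)\ge r(\ell+1)/g_\ell-(g_\ell-1)/g_\ell$; (C4) $x^{\mathrm{bin}}(\ell)\ge0$; (C5) $x^{\mathrm{bin}}(\ell)\le1$; (C6) $x^{\mathrm{bin}}(\ell)\le y(\ell)$; (C7) $y(\ell)\le(g_\ell+1)x^{\mathrm{bin}}(\ell)$; (C8) $r(\ell)\ge0$; (C9) $(g_\ell-1)z(\ell)+r(\ell)=r(\ell+1)$; (C10) $z(\ell)\ge0$; (C11) $z(\ell)\ge -g_\ell+g_\ell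 x^{\mathrm{bin}}(\ell)+r(\ell)$; (C12) $z(\ell)\le g_\ell x^{\mathrm{bin}}(\ell)$; (C13) $z(\ell)\le r(\ell)$; and additionally $r(0)=1$, $r(d)\ge2$, $r(d)\le\gamma^{2^d-1}$. *)

theory Defs
  imports Complex_Main
begin

text \<open>g l = gamma^(2^l). Variables are integer-valued functions of the level l;
  the constraints (with rational right-hand sides) are read over the reals.\<close>

definition S_sys :: "nat \<Rightarrow> int \<Rightarrow> (nat \<Rightarrow> int) \<Rightarrow> (nat \<Rightarrow> int) \<Rightarrow> (nat \<Rightarrow> int)
    \<Rightarrow> (nat \<Rightarrow> int) \<Rightarrow> bool" where
  "S_sys d \<gamma> y xbin z r \<longleftrightarrow>
     (\<forall>l<d. let g = \<gamma> ^ (2 ^ l) in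
        y l \<ge> 0 \<and>
        real_of_int (y l) \<le> real_of_int (r (l+1)) / real_of_int g + 1 / (real_of_int g + 1) \<and>
        real_of_int (y l) \<ge> real_of_int (r (l+1)) / real_of_int g - (real_of_int g - 1) / real_of_int g \<and>
        xbin l \<ge> 0 \<and> xbin l \<le> 1 \<and> xbin l \<le> y l \<and>
        y l \<le> (g + 1) * xbin l \<and>
        r l \<ge> 0 \<and>
        (g - 1) * z l + r l = r (l+1) \<and>
        z l \<ge> 0 \<and>
        z l \<ge> - g + g * xbin l + r l \<and>
        z l \<le> g * xbin l \<and>
        z l \<le> r l)
   \<and> r 0 = 1 \<and> r d \<ge> 2 \<and> r d \<le> \<gamma> ^ (2 ^ d - 1)"

end

theory Submission
  imports Defs
begin

text \<open>The binary variable xbin l selects between z l = 0 and z l = r l, so each level either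
  keeps r or multiplies it by g l = \<gamma>^(2^l). Starting from r 0 = 1, the value r d is therefore
  \<gamma>^e where e is a sum of distinct powers 2^l with l < d, hence e \<le> 2^d - 1; and e \<ge> 1
  because r d \<ge> 2.\<close>

lemma gated_update_cases:
  fixes g x z r r' :: int
  assumes "0 \<le> x" "x \<le> 1" "(g - 1) * z + r = r'" "0 \<le> z"
    "- g + g * x + r \<le> z" "z \<le> g * x" "z \<le> r"
  shows "r' = r \<or> r' = g * r"
proof -
  have "x = 0 \<or> x = 1" using assms(1,2) by auto
  then show ?thesis
  proof
    assume "x = 0"
    then have "z = 0" using assms(4,6) by simp
    then show ?thesis using assms(3) by simp
  next
    assume "x = 1"
    then have "z = r" using assms(5,7) by simp
    then show ?thesis using assms(3) by (simp add: algebra_simps)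
  qed
qed

lemma S_sys_step:
  assumes "S_sys d \<gamma> y xbin z r" and "l < d"
  shows "r (Suc l) = r l \<or> r (Suc l) = \<gamma> ^ 2 ^ l * r l"
  using assms unfolding S_sys_def Let_def
  by (intro gated_update_cases[of "xbin l" _ "z l"]) auto

lemma power_of_doubling_steps:
  fixes r :: "nat \<Rightarrow> 'a::monoid_mult"
  assumes "r 0 = 1"
    and "\<And>l. l < n \<Longrightarrow> r (Suc l) = r l \<or> r (Suc l) = c ^ 2 ^ l * r l"
    and "k \<le> n"
  shows "\<exists>e. e < 2 ^ k \<and> r k = c ^ e"
  using assms(3)
proof (induction k)
  case 0
  then show ?case using assms(1) by auto
next
  case (Suc k)
  then obtain e where e: "e < 2 ^ k" "r k = c ^ e" by auto
  from assms(2)[of k] Suc.prems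
  consider "r (Suc k) = r k" | "r (Suc k) = c ^ 2 ^ k * r k" by fastforce
  then show ?case
  proof cases
    case 1
    then show ?thesis using e by (intro exI[of _ e]) auto
  next
    case 2
    then have "r (Suc k) = c ^ (2 ^ k + e)" using e(2) by (simp add: power_add)
    moreover have "2 ^ k + e < 2 ^ Suc k" using e(1) by simp
    ultimately show ?thesis by blast
  qed
qed

theorem mainTheorem8:
  fixes d :: nat and \<gamma> :: int and y xbin z r :: "nat \<Rightarrow> int"
  assumes "d \<ge> 1" and "\<gamma> \<ge> 2"
    and "S_sys d \<gamma> y xbin z r"
  shows "\<exists>i::nat. 1 \<le> i \<and> i \<le> 2 ^ d - 1 \<and> r d = \<gamma> ^ i"
proof -
  have r0: "r 0 = 1" and rd: "r d \<ge> 2"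
    using assms(3) unfolding S_sys_def by auto
  obtain e where e: "e < 2 ^ d" "r d = \<gamma> ^ e"
    using power_of_doubling_steps[OF r0 S_sys_step[OF assms(3)] order_refl] by blast
  have "e \<noteq> 0"
    using e(2) rd by (cases e) auto
  with e show ?thesis by (intro exI[of _ e]) auto
qed

end
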